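(* Let $V:\mathbb{C}^2\to\mathcal{H}_j$ be the encoding isometry of a spin code which is $\mathsf{X}$-covariant, i.e. $D^j(\mathsf{X})V=V\mathsf{X}$, and suppose the codewords $|\bar0\rangle=V|0\rangle$, $|\bar1\rangle=V|1\rangle$ are real (real coefficients in the basis $|j,m\rangle$). Then for all $0\le k\le 2j$, $-k\le q\le k$: $\langle\bar0|T^k_q|\bar0\rangle=(-1)^{q+k}\langle\bar1|T^k_q|\bar1\rangle$, $\langle\bar0|T^k_q|\bar1\rangle=(-1)^{q+k}\langle\bar0|T^k_q|\bar1\rangle$, and $\langle\bar1|T^k_q|\bar0\rangle=(-1)^{q+k}\langle\bar1|T^k_q|\bar0\rangle$.
   Context: $\mathcal{H}_j$ is the spin-$j$ irrep of $\mathrm{SU}(2)$ with orthonormal basis $|j,m\rangle$, $|m|\le j$ ($J_z$-eigenbasis), $D^j(g)$ the action of $g\in\mathrm{SU}(2)$, and $\mathsf{X}=\begin{pmatrix}0&-i\\-i&0\end{pmatrix}$. Spherical tensors: $T^k_q=\sqrt{\tfrac{2k+1}{2j+1}}\sum_m C^{j\,m+q}_{k\,q,\,j\,m}|j,m+q\rangle\langle j,m|$ with Clebsch–Gordan coefficients $C$. *)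

theory Defs
  imports Complex_Main
begin

text \<open>The spin is encoded by n = 2j (a natural number).  The basis vector
|j,m> of H_j is indexed by a = j + m, a in {0..n}; thus m = (2a - n)/2.
Vectors of H_j are functions nat => complex (only the values on {0..n} matter);
linear maps / matrices are functions nat => nat => complex (row, column).
2x2 matrices are nat => nat => complex with indices 0,1; C^2 has basis |0>, |1>
indexed by 0, 1.  Angular momentum quantum numbers in Clebsch-Gordan coefficients are
passed doubled (as integers), so that half-integers are represented exactly.\<close>

definition Xmat :: "nat \<Rightarrow> nat \<Rightarrow> complex" where
  "Xmat r c = (if (r = 0 \<and> c = 1) \<or> (r = 1 \<and> c = 0) then - \<i> else 0)"

text \<open>Spin-j representation D^j(g), realised on homogeneous polynomials of degree n = 2j
in x (= |0>, spin up) and y (= |1>): |j,m> corresponds to the normalised monomial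
x^(j+m) y^(j-m) / sqrt((j+m)! (j-m)!), and g acts by x |-> g00 x + g10 y,
y |-> g01 x + g11 y.  Entry (a', a) is the coefficient of |j, a'-j> in D^j(g) |j, a-j>.
(This gives the standard Condon-Shortley phase conventions.)\<close>
definition Dj :: "nat \<Rightarrow> (nat \<Rightarrow> nat \<Rightarrow> complex) \<Rightarrow> nat \<Rightarrow> nat \<Rightarrow> complex" where
  "Dj n g a' a =
     complex_of_real (sqrt (fact a' * fact (n - a') / (fact a * fact (n - a)))) *
     (\<Sum>s\<le>a. \<Sum>t\<le>n - a. if s + t = a' then
        of_nat (a choose s) * of_nat ((n - a) choose t) *
        g 0 0 ^ s * g 1 0 ^ (a - s) * g 0 1 ^ t * g 1 1 ^ (n - a - t) else 0)"

definition hfact :: "int \<Rightarrow> real" where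
  "hfact x = fact (nat (x div 2))"

text \<open>Clebsch-Gordan coefficient C^{J M}_{j1 m1, j2 m2} (Racah's formula), all arguments
doubled: cg tj1 tm1 tj2 tm2 tJ tM with tj1 = 2 j1 etc.  It is zero unless the quantum
numbers are admissible.\<close>
definition cg :: "int \<Rightarrow> int \<Rightarrow> int \<Rightarrow> int \<Rightarrow> int \<Rightarrow> int \<Rightarrow> real" where
  "cg tj1 tm1 tj2 tm2 tJ tM =
    (if tM = tm1 + tm2 \<and> 0 \<le> tj1 \<and> 0 \<le> tj2 \<and> 0 \<le> tJ
        \<and> \<bar>tm1\<bar> \<le> tj1 \<and> \<bar>tm2\<bar> \<le> tj2 \<and> \<bar>tM\<bar> \<le> tJ
        \<and> even (tj1 + tm1) \<and> even (tj2 + tm2) \<and> even (tJ + tM)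
        \<and> even (tj1 + tj2 + tJ)
        \<and> \<bar>tj1 - tj2\<bar> \<le> tJ \<and> tJ \<le> tj1 + tj2
     then
       sqrt ((of_int tJ + 1) * hfact (tJ + tj1 - tj2) * hfact (tJ - tj1 + tj2)
             * hfact (tj1 + tj2 - tJ) / hfact (tj1 + tj2 + tJ + 2))
       * sqrt (hfact (tJ + tM) * hfact (tJ - tM) * hfact (tj1 - tm1) * hfact (tj1 + tm1)
             * hfact (tj2 - tm2) * hfact (tj2 + tm2))
       * (\<Sum>s\<in>{s::int. 0 \<le> s \<and> 0 \<le> tj1 + tj2 - tJ - 2*s \<and> 0 \<le> tj1 - tm1 - 2*s
                  \<and> 0 \<le> tj2 + tm2 - 2*s \<and> 0 \<le> tJ - tj2 + tm1 + 2*s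
                  \<and> 0 \<le> tJ - tj1 - tm2 + 2*s}.
           (-1) powi s / (hfact (2*s) * hfact (tj1 + tj2 - tJ - 2*s) * hfact (tj1 - tm1 - 2*s)
              * hfact (tj2 + tm2 - 2*s) * hfact (tJ - tj2 + tm1 + 2*s)
              * hfact (tJ - tj1 - tm2 + 2*s)))
     else 0)"

text \<open>Spherical tensor T^k_q on H_j (n = 2j), entry (a', a) = <j, a'-j| T^k_q |j, a-j>:
T^k_q = sqrt((2k+1)/(2j+1)) sum_m C^{j,m+q}_{k q, j m} |j,m+q><j,m|.\<close>
definition Tkq :: "nat \<Rightarrow> nat \<Rightarrow> int \<Rightarrow> nat \<Rightarrow> nat \<Rightarrow> complex" where
  "Tkq n k q a' a =
     (if int a' = int a + q then
        complex_of_real (sqrt ((2 * real k + 1) / (real n + 1))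
          * cg (2 * int k) (2 * q) (int n) (2 * int a - int n) (int n) (2 * int a' - int n))
      else 0)"

definition melem :: "nat \<Rightarrow> nat \<Rightarrow> int \<Rightarrow> (nat \<Rightarrow> complex) \<Rightarrow> (nat \<Rightarrow> complex) \<Rightarrow> complex" where
  "melem n k q psi phi = (\<Sum>a'\<le>n. \<Sum>a\<le>n. cnj (psi a') * Tkq n k q a' a * phi a)"

end

theory Submission
  imports Defs
begin

text \<open>The matrix D^j(X) sends |j,m> to (-i)^(2j) |j,-m>, so X-covariance says that each codeword
is, up to a unimodular factor, the reflection m \<mapsto> -m of the other.  For real vectors, conjugating
T^k_q by this reflection yields (-1)^(k+q) times its transpose.  On Clebsch-Gordan coefficients this
is the symmetry C^{j M}_{k q, j m} = (-1)^(k-q) C^{j,-m}_{k q, j,-M}, a special case of the exchange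
of j2 and J, which follows from Racah's formula by reversing the summation index.\<close>

definition cg_admissible :: "int \<Rightarrow> int \<Rightarrow> int \<Rightarrow> int \<Rightarrow> int \<Rightarrow> int \<Rightarrow> bool" where
  "cg_admissible tj1 tm1 tj2 tm2 tJ tM \<longleftrightarrow>
     tM = tm1 + tm2 \<and> 0 \<le> tj1 \<and> 0 \<le> tj2 \<and> 0 \<le> tJ
     \<and> \<bar>tm1\<bar> \<le> tj1 \<and> \<bar>tm2\<bar> \<le> tj2 \<and> \<bar>tM\<bar> \<le> tJ
     \<and> even (tj1 + tm1) \<and> even (tj2 + tm2) \<and> even (tJ + tM)
     \<and> even (tj1 + tj2 + tJ)
     \<and> \<bar>tj1 - tj2\<bar> \<le> tJ \<and> tJ \<le> tj1 + tj2"

definition racah_sum :: "int \<Rightarrow> int \<Rightarrow> int \<Rightarrow> int \<Rightarrow> int \<Rightarrow> real" where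
  "racah_sum tj1 tm1 tj2 tm2 tJ =
     (\<Sum>s\<in>{s::int. 0 \<le> s \<and> 0 \<le> tj1 + tj2 - tJ - 2*s \<and> 0 \<le> tj1 - tm1 - 2*s
                  \<and> 0 \<le> tj2 + tm2 - 2*s \<and> 0 \<le> tJ - tj2 + tm1 + 2*s
                  \<and> 0 \<le> tJ - tj1 - tm2 + 2*s}.
           (-1) powi s / (hfact (2*s) * hfact (tj1 + tj2 - tJ - 2*s) * hfact (tj1 - tm1 - 2*s)
              * hfact (tj2 + tm2 - 2*s) * hfact (tJ - tj2 + tm1 + 2*s)
              * hfact (tJ - tj1 - tm2 + 2*s)))"

definition triangle_coeff :: "int \<Rightarrow> int \<Rightarrow> int \<Rightarrow> real" where
  "triangle_coeff ta tb tc =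
     hfact (tc + ta - tb) * hfact (tc - ta + tb) * hfact (ta + tb - tc) / hfact (ta + tb + tc + 2)"

lemma triangle_coeff_swap_23: "triangle_coeff ta tc tb = triangle_coeff ta tb tc"
proof -
  have "tb + ta - tc = ta + tb - tc" "tb - ta + tc = tc - ta + tb" "ta + tc - tb = tc + ta - tb"
    "ta + tc + tb + 2 = ta + tb + tc + 2"
    by simp_all
  then show ?thesis
    unfolding triangle_coeff_def by (simp only:) (simp add: mult_ac)
qed

lemma cg_admissible_swap_j2_J:
  "cg_admissible tj1 tm1 tJ (- tM) tj2 (- tm2) \<longleftrightarrow> cg_admissible tj1 tm1 tj2 tm2 tJ tM"
  unfolding cg_admissible_def by auto

lemma cg_eq_racah:
  "cg tj1 tm1 tj2 tm2 tJ tM =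
    (if cg_admissible tj1 tm1 tj2 tm2 tJ tM then
       sqrt ((of_int tJ + 1) * triangle_coeff tj1 tj2 tJ)
       * sqrt (hfact (tJ + tM) * hfact (tJ - tM) * hfact (tj1 - tm1) * hfact (tj1 + tm1)
             * hfact (tj2 - tm2) * hfact (tj2 + tm2))
       * racah_sum tj1 tm1 tj2 tm2 tJ
     else 0)"
  by (simp only: cg_def cg_admissible_def racah_sum_def triangle_coeff_def
      times_divide_eq_right mult.assoc)

lemma racah_sum_swap_j2_J:
  assumes "tM = tm1 + tm2" and "tj1 - tm1 = 2 * h"
  shows "racah_sum tj1 tm1 tJ (- tM) tj2 = (-1) powi h * racah_sum tj1 tm1 tj2 tm2 tJ"
  unfolding racah_sum_def sum_distrib_left
proof (rule sum.reindex_bij_witness[of _ "\<lambda>s. h - s" "\<lambda>s. h - s"])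
  fix s
  have sign: "(-1::real) powi h * (-1) powi (h - s) = (-1) powi s"
    by (simp add: power_int_minus_left)
  have args:
    "hfact (2*(h - s)) = hfact (tj1 - tm1 - 2*s)"
    "hfact (tj1 + tj2 - tJ - 2*(h - s)) = hfact (tj2 - tJ + tm1 + 2*s)"
    "hfact (tj1 - tm1 - 2*(h - s)) = hfact (2*s)"
    "hfact (tj2 + tm2 - 2*(h - s)) = hfact (tj2 - tj1 - - tM + 2*s)"
    "hfact (tJ - tj2 + tm1 + 2*(h - s)) = hfact (tj1 + tJ - tj2 - 2*s)"
    "hfact (tJ - tj1 - tm2 + 2*(h - s)) = hfact (tJ + - tM - 2*s)"
    using assms by (auto intro!: arg_cong[where f = hfact])
  show "(-1) powi h * ((-1) powi (h - s) / (hfact (2*(h - s)) * hfact (tj1 + tj2 - tJ - 2*(h - s))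
              * hfact (tj1 - tm1 - 2*(h - s)) * hfact (tj2 + tm2 - 2*(h - s))
              * hfact (tJ - tj2 + tm1 + 2*(h - s)) * hfact (tJ - tj1 - tm2 + 2*(h - s))))
      = (-1) powi s / (hfact (2*s) * hfact (tj1 + tJ - tj2 - 2*s) * hfact (tj1 - tm1 - 2*s)
              * hfact (tJ + - tM - 2*s) * hfact (tj2 - tJ + tm1 + 2*s)
              * hfact (tj2 - tj1 - - tM + 2*s))"
    unfolding args by (simp add: sign[symmetric] mult_ac)
qed (use assms in auto)

lemma cg_swap_j2_J:
  "sqrt (of_int tj2 + 1) * cg tj1 tm1 tj2 tm2 tJ tM
     = (-1) powi ((tj1 - tm1) div 2) * sqrt (of_int tJ + 1) * cg tj1 tm1 tJ (- tM) tj2 (- tm2)"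
proof (cases "cg_admissible tj1 tm1 tj2 tm2 tJ tM")
  case False
  then show ?thesis by (simp add: cg_eq_racah cg_admissible_swap_j2_J)
next
  case True
  define h where "h = (tj1 - tm1) div 2"
  have "tM = tm1 + tm2" "tj1 - tm1 = 2 * h"
    using True by (auto simp: cg_admissible_def h_def)
  then have racah: "racah_sum tj1 tm1 tJ (- tM) tj2 = (-1) powi h * racah_sum tj1 tm1 tj2 tm2 tJ"
    by (rule racah_sum_swap_j2_J)
  have sign: "(-1::real) powi h * (-1) powi h = 1"
    by (simp add: power_int_add[symmetric])
  show ?thesis
    using True unfolding cg_eq_racah cg_admissible_swap_j2_J racah h_def[symmetric]
    by (simp add: real_sqrt_mult triangle_coeff_swap_23 mult_ac sign)
qed

lemma cg_swap_j2_J_same_spin: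
  "cg tj1 tm1 tj tm2 tj tM = (-1) powi ((tj1 - tm1) div 2) * cg tj1 tm1 tj (- tM) tj (- tm2)"
proof (cases "0 \<le> tj")
  case True
  then have "sqrt (of_int tj + 1) \<noteq> 0" by simp
  with cg_swap_j2_J[of tj tj1 tm1 tm2 tj tM] show ?thesis by simp
next
  case False
  then show ?thesis by (simp add: cg_eq_racah cg_admissible_def)
qed

lemma Tkq_reflect:
  assumes "b \<le> n" "b' \<le> n"
  shows "Tkq n k q (n - b') (n - b) = (-1) powi (q + int k) * Tkq n k q b b'"
proof (cases "int b = int b' + q")
  case False
  with assms show ?thesis by (auto simp: Tkq_def)
next
  case True
  with assms have shifted: "int (n - b') = int (n - b) + q" by auto
  have reflect_m: "2 * int (n - b) - int n = - (2 * int b - int n)"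
      "2 * int (n - b') - int n = - (2 * int b' - int n)"
    using assms by auto
  have "(-1::real) powi (int k - q) = (-1) powi (q + int k)"
    by (simp add: power_int_minus_left)
  then have cg:
    "cg (2 * int k) (2 * q) (int n) (- (2 * int b - int n)) (int n) (- (2 * int b' - int n))
     = (-1) powi (q + int k)
       * cg (2 * int k) (2 * q) (int n) (2 * int b' - int n) (int n) (2 * int b - int n)"
    using cg_swap_j2_J_same_spin[of "2 * int k" "2 * q" "int n"
        "- (2 * int b - int n)" "- (2 * int b' - int n)"]
    by simp
  show ?thesis
    unfolding Tkq_def reflect_m if_P[OF True] if_P[OF shifted] cg by simp
qed

lemma Dj_antidiagonal:
  assumes "g 0 0 = 0" "g 1 1 = 0" "a \<le> n"
  shows "Dj n g a' a = (if a' = n - a then g 1 0 ^ a * g 0 1 ^ (n - a) else 0)"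
proof -
  let ?c = "g 1 0 ^ a * g 0 1 ^ (n - a)"
  have only_extreme_term:
    "(if s + t = a' then of_nat (a choose s) * of_nat ((n - a) choose t) *
        g 0 0 ^ s * g 1 0 ^ (a - s) * g 0 1 ^ t * g 1 1 ^ (n - a - t) else 0)
     = (if t = n - a then if s = 0 then if a' = n - a then ?c else 0 else 0 else 0)"
    if "t \<le> n - a" for s t
    using that assms by (cases "s = 0"; cases "t = n - a") auto
  have "(\<Sum>s\<le>a. \<Sum>t\<le>n - a. if s + t = a' then of_nat (a choose s) * of_nat ((n - a) choose t) *
        g 0 0 ^ s * g 1 0 ^ (a - s) * g 0 1 ^ t * g 1 1 ^ (n - a - t) else 0)
      = (\<Sum>s\<le>a. \<Sum>t\<le>n - a. if t = n - a then if s = 0 then if a' = n - a then ?c else 0 else 0 else 0)"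
    by (intro sum.cong refl only_extreme_term) simp
  also have "\<dots> = (if a' = n - a then ?c else 0)"
    by (simp add: sum.delta)
  finally show ?thesis
    using assms by (simp add: Dj_def)
qed

lemma Dj_Xmat_apply:
  assumes "a \<le> n"
  shows "(\<Sum>b\<le>n. Dj n Xmat a b * v b) = (- \<i>) ^ n * v (n - a)"
proof -
  have "Dj n Xmat a b = (if b = n - a then (- \<i>) ^ n else 0)" if "b \<le> n" for b
    using Dj_antidiagonal[of Xmat b n a] that assms by (auto simp: Xmat_def power_add[symmetric])
  then have "(\<Sum>b\<le>n. Dj n Xmat a b * v b) = (\<Sum>b\<le>n. if b = n - a then (- \<i>) ^ n * v b else 0)"
    by (intro sum.cong) auto
  then show ?thesis by (simp add: sum.delta)
qed

lemma sum_atMost_reflect: "(\<Sum>a\<le>n. f a) = (\<Sum>a\<le>n. f (n - a :: nat))"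
  using sum.atLeastAtMost_rev[of f 0 n] by (simp add: atLeast0AtMost)

lemma melem_cong:
  assumes "\<And>a. a \<le> n \<Longrightarrow> psi a = psi' a" "\<And>a. a \<le> n \<Longrightarrow> phi a = phi' a"
  shows "melem n k q psi phi = melem n k q psi' phi'"
  unfolding melem_def using assms by (intro sum.cong) auto

lemma melem_scale: "melem n k q (\<lambda>a. z * psi a) (\<lambda>a. w * phi a) = cnj z * w * melem n k q psi phi"
  unfolding melem_def sum_distrib_left by (simp add: mult_ac)

lemma melem_reflect:
  assumes "\<And>a. a \<le> n \<Longrightarrow> psi a \<in> \<real>" "\<And>a. a \<le> n \<Longrightarrow> phi a \<in> \<real>"
  shows "melem n k q (\<lambda>a. psi (n - a)) (\<lambda>a. phi (n - a)) = (-1) powi (q + int k) * melem n k q phi psi"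
proof -
  have "melem n k q (\<lambda>a. psi (n - a)) (\<lambda>a. phi (n - a))
      = (\<Sum>a'\<le>n. \<Sum>a\<le>n. cnj (psi (n - a')) * Tkq n k q (n - (n - a')) (n - (n - a)) * phi (n - a))"
    unfolding melem_def by (intro sum.cong) auto
  also have "\<dots> = (\<Sum>b'\<le>n. \<Sum>b\<le>n. cnj (psi b') * Tkq n k q (n - b') (n - b) * phi b)"
    by (subst (2) sum_atMost_reflect, subst sum_atMost_reflect) (rule refl)
  also have "\<dots> = (\<Sum>b'\<le>n. \<Sum>b\<le>n. (-1) powi (q + int k) * (cnj (phi b) * Tkq n k q b b' * psi b'))"
    using assms by (intro sum.cong) (auto simp: Tkq_reflect Reals_cnj_iff)
  also have "\<dots> = (-1) powi (q + int k) * melem n k q phi psi"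
    unfolding melem_def sum_distrib_left by (rule sum.swap)
  finally show ?thesis .
qed

lemma X_covariant_codeword_reflect:
  assumes covariant: "\<forall>a\<le>n. \<forall>c<2. (\<Sum>b\<le>n. Dj n Xmat a b * V b c) = (\<Sum>d<2. V a d * Xmat d c)"
    and "a \<le> n" "c < 2"
  shows "V a (1 - c) = \<i> * (- \<i>) ^ n * V (n - a) c"
proof -
  have "(\<Sum>d<2. V a d * Xmat d c) = - \<i> * V a (1 - c)"
    using \<open>c < 2\<close> by (auto simp: numeral_2_eq_2 Xmat_def less_Suc_eq)
  with covariant assms(2,3) have "(- \<i>) ^ n * V (n - a) c = - \<i> * V a (1 - c)"
    by (simp add: Dj_Xmat_apply)
  then have "\<i> * ((- \<i>) ^ n * V (n - a) c) = V a (1 - c)"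
    by simp
  then show ?thesis by (simp add: mult.assoc)
qed

lemma X_covariant_melem_flip:
  assumes covariant: "\<forall>a\<le>n. \<forall>c<2. (\<Sum>b\<le>n. Dj n Xmat a b * V b c) = (\<Sum>d<2. V a d * Xmat d c)"
    and real_codewords: "\<forall>a\<le>n. \<forall>c<2. V a c \<in> \<real>"
    and "c < 2" "c' < 2"
  shows "melem n k q (\<lambda>a. V a c) (\<lambda>a. V a c')
       = (-1) powi (q + int k) * melem n k q (\<lambda>a. V a (1 - c')) (\<lambda>a. V a (1 - c))"
proof -
  define z where "z = \<i> * (- \<i>) ^ n"
  have reflect: "V a c'' = z * V (n - a) (1 - c'')" if "a \<le> n" "c'' < 2" for a c''
    using X_covariant_codeword_reflect[OF covariant that(1), of "1 - c''"] that
    by (simp add: z_def)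
  have "norm z = 1"
    unfolding z_def by (simp add: norm_mult norm_power)
  then have "cnj z * z = 1"
    using complex_norm_square[of z] by (simp add: mult.commute)
  have "melem n k q (\<lambda>a. V a c) (\<lambda>a. V a c')
      = melem n k q (\<lambda>a. z * V (n - a) (1 - c)) (\<lambda>a. z * V (n - a) (1 - c'))"
    by (intro melem_cong reflect) (use assms in auto)
  also have "\<dots> = melem n k q (\<lambda>a. V (n - a) (1 - c)) (\<lambda>a. V (n - a) (1 - c'))"
    unfolding melem_scale \<open>cnj z * z = 1\<close> by simp
  also have "\<dots> = (-1) powi (q + int k) * melem n k q (\<lambda>a. V a (1 - c')) (\<lambda>a. V a (1 - c))"
    using real_codewords by (intro melem_reflect) auto
  finally show ?thesis .
qed

theorem lemmaS6:
  fixes n :: nat and V :: "nat \<Rightarrow> nat \<Rightarrow> complex"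
  assumes isometry: "\<forall>c<2. \<forall>c'<2. (\<Sum>a\<le>n. cnj (V a c) * V a c') = (if c = c' then 1 else 0)"
    and covariant: "\<forall>a\<le>n. \<forall>c<2. (\<Sum>b\<le>n. Dj n Xmat a b * V b c) = (\<Sum>d<2. V a d * Xmat d c)"
    and real_codewords: "\<forall>a\<le>n. \<forall>c<2. V a c \<in> \<real>"
  shows "\<forall>k\<le>n. \<forall>q::int. - int k \<le> q \<and> q \<le> int k \<longrightarrow>
           melem n k q (\<lambda>a. V a 0) (\<lambda>a. V a 0) = (-1) powi (q + int k) * melem n k q (\<lambda>a. V a 1) (\<lambda>a. V a 1)
         \<and> melem n k q (\<lambda>a. V a 0) (\<lambda>a. V a 1) = (-1) powi (q + int k) * melem n k q (\<lambda>a. V a 0) (\<lambda>a. V a 1)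
         \<and> melem n k q (\<lambda>a. V a 1) (\<lambda>a. V a 0) = (-1) powi (q + int k) * melem n k q (\<lambda>a. V a 1) (\<lambda>a. V a 0)"
proof (intro allI impI conjI)
  fix k q
  note flip = X_covariant_melem_flip[OF covariant real_codewords, of _ _ k q]
  show "melem n k q (\<lambda>a. V a 0) (\<lambda>a. V a 0) = (-1) powi (q + int k) * melem n k q (\<lambda>a. V a 1) (\<lambda>a. V a 1)"
    using flip[of 0 0] by simp
  show "melem n k q (\<lambda>a. V a 0) (\<lambda>a. V a 1) = (-1) powi (q + int k) * melem n k q (\<lambda>a. V a 0) (\<lambda>a. V a 1)"
    using flip[of 0 1] by simp
  show "melem n k q (\<lambda>a. V a 1) (\<lambda>a. V a 0) = (-1) powi (q + int k) * melem n k q (\<lambda>a. V a 1) (\<lambda>a. V a 0)"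
    using flip[of 1 0] by simp
qed

end
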